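(* Let $C\le\mathbb{F}^n$ be an $\mathbb{F}$-linear $[n,k,d]$-code with ordered basis $B=(a_1,\dots,a_k)$, and let ${\sf Basis}(B)$ and ${\sf Code}(B)$ be as defined in the context. (a) ${\sf Basis}(B)$ is an ordered basis of ${\sf Code}(B)$. Moreover, ${\sf Code}(B)$ is an $\mathbb{F}$-linear $[n',k',d']$-code with $n'=(k+1)n$, $k'=k+1$ and $d'\ge kd$. (b) Suppose that $C$ is $u$-bounded relative to $B$ for some positive integer $u$. Then $d'=(k+1)d$. Furthermore, ${\sf Code}(B)$ is $ku$-bounded relative to ${\sf Basis}(B)$ if and only if $u\ge d(1+2k^{-1})$.
   Context: $\mathbb{F}$ is an arbitrary field and vectors in $\mathbb{F}^n$ are column vectors. The weight $\mathrm{wt}(x)$ of $x\in\mathbb{F}^n$ is its number of nonzero coordinates. An $[n,k,d]$-code is a $k$-dimensional subspace of $\mathbb{F}^n$ whose minimum distance (the minimum weight of a nonzero codeword) is $d$. Boundedness: let $u$ be a positive integer and let $C$ be an $[n,k,d]$-code with ordered basis $B=(a_1,\dots,a_k)$. Then $C$ is $u$-bounded relative to $B$ if all three of the following hold: (i) $\mathrm{wt}(a_j)=u$ for every $j$; (ii) $\mathrm{wt}\big(\sum_{j=1}^k a_j\big)=d$; (iii) $u\ge d(1+k^{-1})$. Construction: for an ordered basis $B=(a_1,\dots,a_k)$ of a code $C\le\mathbb{F}^n$, set $a_0:=0\in\mathbb{F}^n$. For $m=1,\dots,k+1$, let $a'_m\in\mathbb{F}^{n(k+1)}$ be the column vector made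 of $k+1$ blocks of length $n$. Its $r$-th block, for $r=1,\dots,k+1$, is $a_{r-m}$, where the subscript is read modulo $k+1$ with representatives in $\{0,\dots,k\}$. Thus $a'_1=(0,a_1,\dots,a_k)^T$, $a'_2=(a_k,0,a_1,\dots,a_{k-1})^T$, …, $a'_{k+1}=(a_1,\dots,a_k,0)^T$ in block form. Define ${\sf Basis}(B)=(a'_1,\dots,a'_{k+1})$, and let ${\sf Code}(B)\le\mathbb{F}^{n(k+1)}$ be its $\mathbb{F}$-linear span. *)

theory Defs
  imports Complex_Main "HOL-Library.Function_Algebras"
begin

text \<open>Vectors of F^n are modelled as functions nat => F that vanish outside {0..<n}.\<close>

definition fscale :: "'a::field \<Rightarrow> (nat \<Rightarrow> 'a) \<Rightarrow> (nat \<Rightarrow> 'a)" where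
  "fscale c x = (\<lambda>i. c * x i)"

lemma vector_space_fscale: "vector_space (fscale :: 'a::field \<Rightarrow> _)"
  by unfold_locales (auto simp: fscale_def algebra_simps fun_eq_iff)

definition Fn :: "nat \<Rightarrow> (nat \<Rightarrow> 'a::zero) set" where
  "Fn n = {x. \<forall>i. n \<le> i \<longrightarrow> x i = 0}"

definition wt :: "nat \<Rightarrow> (nat \<Rightarrow> 'a::zero) \<Rightarrow> nat" where
  "wt n x = card {i. i < n \<and> x i \<noteq> 0}"

definition min_dist :: "nat \<Rightarrow> (nat \<Rightarrow> 'a::zero) set \<Rightarrow> nat" where
  "min_dist n C = Min (wt n ` (C - {\<lambda>_. 0}))"

definition is_code :: "nat \<Rightarrow> nat \<Rightarrow> nat \<Rightarrow> (nat \<Rightarrow> 'a::field) set \<Rightarrow> bool" where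
  "is_code n k d C \<longleftrightarrow> C \<subseteq> Fn n \<and> module.subspace fscale C
     \<and> vector_space.dim fscale C = k \<and> min_dist n C = d"

definition ordered_basis :: "(nat \<Rightarrow> 'a::field) list \<Rightarrow> (nat \<Rightarrow> 'a) set \<Rightarrow> bool" where
  "ordered_basis B C \<longleftrightarrow> distinct B \<and> module.independent fscale (set B)
     \<and> module.span fscale (set B) = C"

definition u_bounded :: "nat \<Rightarrow> nat \<Rightarrow> nat \<Rightarrow> (nat \<Rightarrow> 'a::field) list \<Rightarrow> bool" where
  "u_bounded n d u B \<longleftrightarrow> (\<forall>a\<in>set B. wt n a = u) \<and> wt n (sum_list B) = d
     \<and> real u \<ge> real d * (1 + 1 / real (length B))"

text \<open>The vector a'_(m+1) (m = 0..k, 0-based) of length (k+1)n: its (r+1)-th block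
  (r = 0..k) is a_j with j = (r - m) mod (k+1), where a_0 = 0 and a_j = B!(j-1).\<close>
definition aug_vec :: "(nat \<Rightarrow> 'a::field) list \<Rightarrow> nat \<Rightarrow> nat \<Rightarrow> (nat \<Rightarrow> 'a)" where
  "aug_vec B n m = (\<lambda>i. if i < (length B + 1) * n then
      (let j = nat ((int (i div n) - int m) mod int (length B + 1))
       in if j = 0 then 0 else (B ! (j - 1)) (i mod n))
     else 0)"

definition Basis_of :: "(nat \<Rightarrow> 'a::field) list \<Rightarrow> nat \<Rightarrow> (nat \<Rightarrow> 'a) list" where
  "Basis_of B n = map (aug_vec B n) [0..<length B + 1]"

definition Code_of :: "(nat \<Rightarrow> 'a::field) list \<Rightarrow> nat \<Rightarrow> (nat \<Rightarrow> 'a) set" where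
  "Code_of B n = module.span fscale (set (Basis_of B n))"

end

(* Cut a codeword x = c_1 a'_1 + ... + c_(k+1) a'_(k+1) of Code(B) into its k+1 blocks of
   length n.  Block r is a linear combination of a_1, ..., a_k whose coefficients are all the
   c_m except c_r, cyclically shifted; so it is a codeword of C, and by independence of B it
   vanishes only if every c_m with m ~= r does.  Hence a nonzero codeword has at most one
   zero block: either all k+1 blocks have weight >= d, or x is a multiple of a single a'_s,
   whose weight is wt a_1 + ... + wt a_k.  This gives d' >= kd, the independence of Basis(B),
   and, under u-boundedness (where that sum is ku >= (k+1)d), d' = (k+1)d, attained by
   a'_1 + ... + a'_(k+1), all of whose blocks equal a_1 + ... + a_k. *)

theory Submission
  imports Defs
begin

interpretation V: vector_space "fscale :: 'a::field \<Rightarrow> (nat \<Rightarrow> 'a) \<Rightarrow> _"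
  by (rule vector_space_fscale)

lemma fscale_apply [simp]: "fscale c x i = c * x i"
  by (simp add: fscale_def)

lemma sum_fun_apply: "(\<Sum>m\<in>M. f m) i = (\<Sum>m\<in>M. f m i)"
  by (induction M rule: infinite_finite_induct) auto

lemma wt_fscale: "c \<noteq> 0 \<Longrightarrow> wt n (fscale c x) = wt n x"
  by (simp add: wt_def)

lemma wt_zero [simp]: "wt n 0 = 0"
  by (simp add: wt_def)

lemma wt_le: "wt n x \<le> n"
  unfolding wt_def by (rule card_mono[of "{..<n}", simplified]) auto

lemma wt_eq_sum: "wt n x = (\<Sum>i<n. of_bool (x i \<noteq> 0))"
  by (simp add: wt_def Int_def)

definition block :: "nat \<Rightarrow> (nat \<Rightarrow> 'a::zero) \<Rightarrow> nat \<Rightarrow> nat \<Rightarrow> 'a" where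
  "block n x r = (\<lambda>i. if i < n then x (r * n + i) else 0)"

lemma wt_block_sum: "wt (K * n) x = (\<Sum>r<K. wt n (block n x r))"
proof -
  have "wt (K * n) x = (\<Sum>i<K * n. of_bool (x i \<noteq> 0))"
    by (rule wt_eq_sum)
  also have "\<dots> = (\<Sum>r<K. \<Sum>i\<in>{r * n..<r * n + n}. of_bool (x i \<noteq> 0))"
    by (rule sum.nat_group[symmetric])
  also have "\<dots> = (\<Sum>r<K. \<Sum>i<n. of_bool (x (r * n + i) \<noteq> 0))"
  proof (rule sum.cong)
    fix r
    show "(\<Sum>i\<in>{r * n..<r * n + n}. of_bool (x i \<noteq> 0)) = (\<Sum>i<n. of_bool (x (r * n + i) \<noteq> 0))"
      using sum.shift_bounds_nat_ivl[of "\<lambda>i. of_bool (x i \<noteq> 0)" 0 "r * n" n]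
      by (simp add: add.commute atLeast0LessThan)
  qed simp
  also have "\<dots> = (\<Sum>r<K. wt n (block n x r))"
    by (simp only: wt_eq_sum block_def) simp
  finally show ?thesis .
qed

lemma block_sum_fscale:
  "block n (\<Sum>m\<in>M. fscale (c m) (f m)) r = (\<Sum>m\<in>M. fscale (c m) (block n (f m) r))"
  by (auto simp: block_def sum_fun_apply fun_eq_iff)

lemma finite_wt_image: "finite (wt n ` S)"
  by (rule finite_subset[of _ "{..n}"]) (auto simp: wt_le)

lemma min_dist_le_wt: "x \<in> C \<Longrightarrow> x \<noteq> 0 \<Longrightarrow> min_dist n C \<le> wt n x"
  unfolding min_dist_def zero_fun_def[symmetric] by (auto intro: Min_le finite_wt_image)

lemma le_min_dist:
  assumes "x \<in> C" "x \<noteq> 0" and "\<And>y. y \<in> C \<Longrightarrow> y \<noteq> 0 \<Longrightarrow> m \<le> wt n y"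
  shows "m \<le> min_dist n C"
  using assms unfolding min_dist_def zero_fun_def[symmetric]
  by (subst Min_ge_iff) (auto intro: finite_wt_image)

lemma subspace_Fn: "V.subspace (Fn n)"
  by (auto simp: V.subspace_def Fn_def)

lemma sum_set_distinct_nth: "distinct xs \<Longrightarrow> sum f (set xs) = (\<Sum>j<length xs. f (xs ! j))"
  by (simp add: sum.distinct_set_conv_list sum_list_sum_nth atLeast0LessThan)

context module
begin

lemma scalars_zero_if_independent_nth:
  assumes "distinct xs" "independent (set xs)" "(\<Sum>j<length xs. e j *s xs ! j) = 0" "j < length xs"
  shows "e j = 0"
proof -
  define u where "u = (\<lambda>v. e (the_inv_into {..<length xs} ((!) xs) v))"
  have inj: "inj_on ((!) xs) {..<length xs}"
    using assms(1) by (simp add: inj_on_def nth_eq_iff_index_eq)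
  have u_nth: "u (xs ! i) = e i" if "i < length xs" for i
    unfolding u_def using the_inv_into_f_f[OF inj] that by simp
  have "(\<Sum>v\<in>set xs. u v *s v) = (\<Sum>i<length xs. e i *s xs ! i)"
    by (simp add: sum_set_distinct_nth[OF assms(1)] u_nth)
  then have "u (xs ! j) = 0"
    using independentD[OF assms(2), of "set xs"] assms(3,4) by simp
  then show ?thesis
    using u_nth assms(4) by simp
qed

end

definition cyclic_diff :: "nat \<Rightarrow> nat \<Rightarrow> nat \<Rightarrow> nat" where
  "cyclic_diff K r m = nat ((int r - int m) mod int K)"

lemma cyclic_diff_less: "0 < K \<Longrightarrow> cyclic_diff K r m < K"
  by (simp add: cyclic_diff_def nat_less_iff)

lemma cyclic_diff_cyclic_diff: "m < K \<Longrightarrow> cyclic_diff K r (cyclic_diff K r m) = m"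
  by (simp add: cyclic_diff_def mod_diff_right_eq)

lemma cyclic_diff_inject:
  assumes "r < K" "r' < K"
  shows "cyclic_diff K r m = cyclic_diff K r' m \<longleftrightarrow> r = r'"
proof
  assume "cyclic_diff K r m = cyclic_diff K r' m"
  moreover have "0 \<le> (int r - int m) mod int K" "0 \<le> (int r' - int m) mod int K"
    using assms by simp_all
  ultimately have "(int r - int m) mod int K = (int r' - int m) mod int K"
    by (simp add: cyclic_diff_def eq_nat_nat_iff)
  then have "int K dvd int r - int r'"
    by (simp add: mod_eq_dvd_iff)
  then show "r = r'"
    using dvd_imp_le_int[of "int r - int r'" "int K"] assms by linarith
qed simp

lemma cyclic_diff_eq_0_iff: "r < K \<Longrightarrow> m < K \<Longrightarrow> cyclic_diff K r m = 0 \<longleftrightarrow> r = m"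
  using cyclic_diff_inject[of r K m m] by (simp add: cyclic_diff_def)

lemma sum_cyclic_diff_reindex:
  "(\<Sum>m<K. f m (cyclic_diff K r m)) = (\<Sum>j<K. f (cyclic_diff K r j) j)"
  by (rule sum.reindex_bij_witness[where i="cyclic_diff K r" and j="cyclic_diff K r"])
     (auto simp: cyclic_diff_cyclic_diff cyclic_diff_less)

lemma sum_cyclic_diff_reindex_left: "(\<Sum>r<K. f (cyclic_diff K r m)) = (\<Sum>j<K. f j)"
proof (cases "K = 0")
  case False
  have "inj_on (\<lambda>r. cyclic_diff K r m) {..<K}"
    by (intro inj_onI) (simp add: cyclic_diff_inject)
  moreover have "(\<lambda>r. cyclic_diff K r m) ` {..<K} = {..<K}"
    using False calculation by (intro endo_inj_surj) (auto simp: cyclic_diff_less)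
  ultimately show ?thesis
    using sum.reindex[of "\<lambda>r. cyclic_diff K r m" "{..<K}" f] by simp
qed simp

text \<open>Here \<open>(0 # B) ! j\<close> is the paper's \<open>a\<^sub>j\<close>, with \<open>a\<^sub>0 = 0\<close>.\<close>

lemma aug_vec_apply:
  assumes "i < n" "r < length B + 1"
  shows "aug_vec B n m (r * n + i) = ((0 # B) ! cyclic_diff (length B + 1) r m) i"
proof -
  have "r * n + i < (r + 1) * n"
    using assms by simp
  also have "\<dots> \<le> (length B + 1) * n"
    using assms by (intro mult_le_mono1) simp
  finally show ?thesis
    using assms by (simp add: aug_vec_def cyclic_diff_def nth_Cons')
qed

lemma aug_vec_in_Fn: "aug_vec B n m \<in> Fn ((length B + 1) * n)"
  by (simp add: aug_vec_def Fn_def)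

lemma length_Basis_of [simp]: "length (Basis_of B n) = length B + 1"
  by (simp add: Basis_of_def)

lemma set_Basis_of: "set (Basis_of B n) = aug_vec B n ` {..<length B + 1}"
  unfolding Basis_of_def set_map set_upt atLeast0LessThan ..

lemma u_bound_imp_le:
  assumes "0 < k" "real d * (1 + 1 / real k) \<le> real u"
  shows "(k + 1) * d \<le> k * u"
proof -
  have "real d * (real k + 1) \<le> real k * real u"
    using assms by (simp add: field_simps)
  then have "real ((k + 1) * d) \<le> real (k * u)"
    by (simp add: algebra_simps)
  then show ?thesis
    by linarith
qed

lemma u_bound_Suc_iff:
  assumes "0 < k"
  shows "real ((k + 1) * d) * (1 + 1 / real (k + 1)) \<le> real (k * u)
    \<longleftrightarrow> real d * (1 + 2 / real k) \<le> real u"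
proof -
  have "real ((k + 1) * d) * (1 + 1 / real (k + 1)) = real d * (real k + 2)"
    by (simp add: field_simps)
  moreover have "real d * (1 + 2 / real k) = real d * (real k + 2) / real k"
    using assms by (simp add: field_simps)
  ultimately show ?thesis
    using assms by (simp add: pos_divide_le_eq mult.commute)
qed

locale code_basis =
  fixes n :: nat and B :: "(nat \<Rightarrow> 'a::field) list"
  assumes distinct_B: "distinct B"
    and independent_B: "V.independent (set B)"
    and B_in_Fn: "set B \<subseteq> Fn n"
    and B_nonempty: "B \<noteq> []"
begin

abbreviation K :: nat where "K \<equiv> length B + 1"

definition codeword :: "(nat \<Rightarrow> 'a) \<Rightarrow> nat \<Rightarrow> 'a" where
  "codeword c = (\<Sum>m<K. fscale (c m) (aug_vec B n m))"

lemma zero_notin_B: "0 \<notin> set B"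
  using V.dependent_zero independent_B by blast

lemma Cons_zero_nth_in_B: "0 < j \<Longrightarrow> j < K \<Longrightarrow> (0 # B) ! j \<in> set B"
  by (cases j) auto

lemma block_aug_vec:
  assumes "r < K"
  shows "block n (aug_vec B n m) r = (0 # B) ! cyclic_diff K r m"
proof -
  have "set (0 # B) \<subseteq> Fn n"
    using B_in_Fn by (simp add: Fn_def)
  moreover have "(0 # B) ! cyclic_diff K r m \<in> set (0 # B)"
    by (intro nth_mem) (simp add: cyclic_diff_less)
  ultimately have "(0 # B) ! cyclic_diff K r m \<in> Fn n"
    by blast
  then show ?thesis
    using assms by (auto simp: block_def aug_vec_apply Fn_def fun_eq_iff)
qed

lemma block_aug_vec_eq_0_iff:
  assumes "r < K" "m < K"
  shows "block n (aug_vec B n m) r = 0 \<longleftrightarrow> r = m"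
proof -
  have "(0 # B) ! j \<noteq> 0" if "0 < j" "j < K" for j
    using zero_notin_B Cons_zero_nth_in_B[OF that] by metis
  then show ?thesis
    using assms cyclic_diff_less[of K r m] cyclic_diff_eq_0_iff[OF assms]
    by (auto simp: block_aug_vec)
qed

lemma block_codeword:
  assumes "r < K"
  shows "block n (codeword c) r = (\<Sum>j<length B. fscale (c (cyclic_diff K r (Suc j))) (B ! j))"
proof -
  have "block n (codeword c) r = (\<Sum>m<K. fscale (c m) ((0 # B) ! cyclic_diff K r m))"
    unfolding codeword_def block_sum_fscale using assms by (simp add: block_aug_vec)
  also have "\<dots> = (\<Sum>j<K. fscale (c (cyclic_diff K r j)) ((0 # B) ! j))"
    by (rule sum_cyclic_diff_reindex)
  also have "\<dots> = (\<Sum>j<length B. fscale (c (cyclic_diff K r (Suc j))) (B ! j))"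
    by (simp only: Suc_eq_plus1[symmetric] sum.lessThan_Suc_shift) simp
  finally show ?thesis .
qed

lemma block_codeword_in_span: "r < K \<Longrightarrow> block n (codeword c) r \<in> V.span (set B)"
  unfolding block_codeword by (intro V.span_sum V.span_scale V.span_base nth_mem) simp

lemma codeword_coeff_eq_0_if_block_eq_0:
  assumes "r < K" "block n (codeword c) r = 0" "s < K" "s \<noteq> r"
  shows "c s = 0"
proof -
  define j where "j = cyclic_diff K r s - 1"
  have j: "j < length B" "Suc j = cyclic_diff K r s"
    using cyclic_diff_less[of K r s] cyclic_diff_eq_0_iff[of r K s] assms
    unfolding j_def by auto
  have "c (cyclic_diff K r (Suc j)) = 0"
    using V.scalars_zero_if_independent_nth[OF distinct_B independent_B _ j(1)]
      block_codeword[OF assms(1)] assms(2) by simp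
  then show ?thesis
    using j(2) cyclic_diff_cyclic_diff[OF assms(3)] by simp
qed

lemma codeword_eq_0_iff: "codeword c = 0 \<longleftrightarrow> (\<forall>m<K. c m = 0)"
proof \<comment> \<open>blocks 0 and 1 both vanish, which needs \<open>B \<noteq> []\<close>\<close>
  assume "codeword c = 0"
  then have "block n (codeword c) r = 0" for r
    by (simp add: block_def fun_eq_iff)
  moreover have "1 < K"
    using B_nonempty by simp
  ultimately show "\<forall>m<K. c m = 0"
    using codeword_coeff_eq_0_if_block_eq_0[of 0 c] codeword_coeff_eq_0_if_block_eq_0[of 1 c]
    by (metis less_trans zero_less_one zero_neq_one)
qed (simp add: codeword_def)

lemma inj_on_aug_vec: "inj_on (aug_vec B n) {..<K}"
  using block_aug_vec_eq_0_iff by (intro inj_onI) (metis lessThan_iff)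

lemma distinct_Basis_of: "distinct (Basis_of B n)"
  using inj_on_aug_vec unfolding Basis_of_def distinct_map set_upt atLeast0LessThan by simp

lemma sum_set_Basis_of: "(\<Sum>v\<in>set (Basis_of B n). f v) = (\<Sum>m<K. f (aug_vec B n m))"
  unfolding set_Basis_of sum.reindex[OF inj_on_aug_vec] comp_def ..

lemma Code_of_eq_range_codeword: "Code_of B n = range codeword"
proof
  show "Code_of B n \<subseteq> range codeword"
    unfolding Code_of_def V.span_finite[OF finite_set] sum_set_Basis_of codeword_def by auto
  show "range codeword \<subseteq> Code_of B n"
    unfolding Code_of_def codeword_def set_Basis_of
    by (intro image_subsetI V.span_sum V.span_scale V.span_base imageI) simp
qed

lemma independent_Basis_of: "V.independent (set (Basis_of B n))"
proof (rule V.independent_if_scalars_zero)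
  fix f v
  assume sum_eq_0: "(\<Sum>v\<in>set (Basis_of B n). fscale (f v) v) = 0"
    and "v \<in> set (Basis_of B n)"
  then obtain m where "m < K" "v = aug_vec B n m"
    by (auto simp: set_Basis_of)
  moreover have "codeword (\<lambda>m. f (aug_vec B n m)) = 0"
    using sum_eq_0 unfolding sum_set_Basis_of codeword_def .
  ultimately show "f v = 0"
    by (simp add: codeword_eq_0_iff)
qed simp

lemma Code_of_subset_Fn: "Code_of B n \<subseteq> Fn (K * n)"
  unfolding Code_of_def
  by (rule V.span_minimal) (use aug_vec_in_Fn subspace_Fn in \<open>auto simp: set_Basis_of\<close>)

lemma dim_Code_of: "V.dim (Code_of B n) = K"
  unfolding Code_of_def V.dim_span_eq_card_independent[OF independent_Basis_of]
  by (simp add: distinct_card distinct_Basis_of)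

lemma wt_aug_vec:
  assumes "m < K"
  shows "wt (K * n) (aug_vec B n m) = (\<Sum>b\<in>set B. wt n b)"
proof -
  have "wt (K * n) (aug_vec B n m) = (\<Sum>r<K. wt n ((0 # B) ! cyclic_diff K r m))"
    unfolding wt_block_sum by (intro sum.cong) (simp_all add: block_aug_vec)
  also have "\<dots> = (\<Sum>j<K. wt n ((0 # B) ! j))"
    by (rule sum_cyclic_diff_reindex_left)
  also have "\<dots> = (\<Sum>j<length B. wt n (B ! j))"
    by (simp only: Suc_eq_plus1[symmetric] sum.lessThan_Suc_shift) simp
  finally show ?thesis
    by (simp add: sum_set_distinct_nth[OF distinct_B])
qed

lemma codeword_eq_fscale_if_block_eq_0:
  assumes "s < K" "block n (codeword c) s = 0"
  shows "codeword c = fscale (c s) (aug_vec B n s)"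
proof -
  have "codeword c = (\<Sum>m\<in>{s}. fscale (c m) (aug_vec B n m))"
    unfolding codeword_def
    by (rule sum.mono_neutral_right) (use assms codeword_coeff_eq_0_if_block_eq_0 in auto)
  then show ?thesis
    by simp
qed

lemma wt_codeword_cases:
  assumes "codeword c \<noteq> 0"
  shows "K * min_dist n (V.span (set B)) \<le> wt (K * n) (codeword c)
    \<or> wt (K * n) (codeword c) = (\<Sum>b\<in>set B. wt n b)"
proof (cases "\<forall>r<K. block n (codeword c) r \<noteq> 0")
  case True
  have "min_dist n (V.span (set B)) \<le> wt n (block n (codeword c) r)" if "r \<in> {..<K}" for r
    using True that min_dist_le_wt block_codeword_in_span by blast
  then have "of_nat (card {..<K}) * min_dist n (V.span (set B)) \<le> (\<Sum>r<K. wt n (block n (codeword c) r))"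
    by (rule sum_bounded_below)
  then show ?thesis
    unfolding wt_block_sum card_lessThan of_nat_id by blast
next
  case False
  then obtain s where s: "s < K" "block n (codeword c) s = 0"
    by blast
  then have "codeword c = fscale (c s) (aug_vec B n s)"
    by (rule codeword_eq_fscale_if_block_eq_0)
  moreover from this have "c s \<noteq> 0"
    using assms by auto
  ultimately show ?thesis
    using wt_aug_vec[OF s(1)] by (simp add: wt_fscale)
qed

lemma codeword_one_in_Code_of: "codeword (\<lambda>_. 1) \<in> Code_of B n"
  by (simp add: Code_of_eq_range_codeword)

lemma codeword_one_nonzero: "codeword (\<lambda>_. 1) \<noteq> 0"
  using codeword_eq_0_iff by force

lemma wt_codeword_one: "wt (K * n) (codeword (\<lambda>_. 1)) = K * wt n (sum_list B)"
proof -
  have "block n (codeword (\<lambda>_. 1)) r = sum_list B" if "r < K" for r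
    using that by (simp add: block_codeword sum_list_sum_nth atLeast0LessThan)
  then show ?thesis
    unfolding wt_block_sum by simp
qed

lemma sum_list_Basis_of_eq_codeword_one: "sum_list (Basis_of B n) = codeword (\<lambda>_. 1)"
  by (simp add: Basis_of_def interv_sum_list_conv_sum_set_nat atLeast0LessThan codeword_def)

lemma length_mult_min_dist_le:
  "length B * min_dist n (V.span (set B)) \<le> min_dist (K * n) (Code_of B n)"
proof (rule le_min_dist[OF codeword_one_in_Code_of codeword_one_nonzero])
  fix y
  assume "y \<in> Code_of B n" "y \<noteq> 0"
  then obtain c where y: "y = codeword c" and nonzero: "codeword c \<noteq> 0"
    by (auto simp: Code_of_eq_range_codeword)
  have "length B * min_dist n (V.span (set B)) \<le> (\<Sum>b\<in>set B. wt n b)"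
    using sum_bounded_below[of "set B" "min_dist n (V.span (set B))" "wt n"]
      min_dist_le_wt[OF V.span_base] zero_notin_B distinct_card[OF distinct_B]
    by (metis of_nat_id)
  moreover have "length B * min_dist n (V.span (set B)) \<le> K * min_dist n (V.span (set B))"
    by simp
  ultimately show "length B * min_dist n (V.span (set B)) \<le> wt (K * n) y"
    using wt_codeword_cases[OF nonzero] y by (auto intro: order_trans)
qed

lemma min_dist_Code_of_if_u_bounded:
  assumes "u_bounded n (min_dist n (V.span (set B))) u B"
  shows "min_dist (K * n) (Code_of B n) = K * min_dist n (V.span (set B))"
proof (rule antisym)
  let ?d = "min_dist n (V.span (set B))"
  have "min_dist (K * n) (Code_of B n) \<le> wt (K * n) (codeword (\<lambda>_. 1))"
    by (rule min_dist_le_wt[OF codeword_one_in_Code_of codeword_one_nonzero])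
  also have "\<dots> = K * ?d"
    using assms by (simp only: wt_codeword_one) (simp add: u_bounded_def)
  finally show "min_dist (K * n) (Code_of B n) \<le> K * ?d" .
  have "(\<Sum>b\<in>set B. wt n b) = length B * u"
    using assms by (simp add: u_bounded_def distinct_card[OF distinct_B])
  moreover have "K * ?d \<le> length B * u"
    using assms B_nonempty by (intro u_bound_imp_le) (simp_all add: u_bounded_def)
  ultimately show "K * ?d \<le> min_dist (K * n) (Code_of B n)"
    using wt_codeword_cases
    by (intro le_min_dist[OF codeword_one_in_Code_of codeword_one_nonzero])
       (fastforce simp: Code_of_eq_range_codeword)
qed

lemma u_bounded_Basis_of_iff:
  assumes "u_bounded n d u B"
  shows "u_bounded (K * n) (K * d) (length B * u) (Basis_of B n)
    \<longleftrightarrow> real d * (1 + 2 / real (length B)) \<le> real u"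
proof -
  have "wt (K * n) a = length B * u" if "a \<in> set (Basis_of B n)" for a
    using that assms wt_aug_vec
    by (auto simp: set_Basis_of u_bounded_def distinct_card[OF distinct_B])
  moreover have "wt (K * n) (sum_list (Basis_of B n)) = K * d"
    using assms by (simp only: sum_list_Basis_of_eq_codeword_one wt_codeword_one) (simp add: u_bounded_def)
  ultimately have "u_bounded (K * n) (K * d) (length B * u) (Basis_of B n)
      \<longleftrightarrow> real (K * d) * (1 + 1 / real K) \<le> real (length B * u)"
    by (simp add: u_bounded_def)
  also have "\<dots> \<longleftrightarrow> real d * (1 + 2 / real (length B)) \<le> real u"
    using B_nonempty by (intro u_bound_Suc_iff) simp
  finally show ?thesis .
qed

end

theorem proposition3p3:
  fixes n k d :: nat and B :: "(nat \<Rightarrow> 'a::field) list" and C :: "(nat \<Rightarrow> 'a) set"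
  assumes code: "is_code n k d C"
    and basis: "ordered_basis B C"
    and len: "length B = k"
    and kpos: "k \<ge> 1"
  shows "ordered_basis (Basis_of B n) (Code_of B n)
         \<and> length (Basis_of B n) = k + 1
         \<and> is_code ((k + 1) * n) (k + 1) (min_dist ((k + 1) * n) (Code_of B n)) (Code_of B n)
         \<and> min_dist ((k + 1) * n) (Code_of B n) \<ge> k * d
         \<and> (\<forall>u::nat. u > 0 \<longrightarrow> u_bounded n d u B \<longrightarrow>
              min_dist ((k + 1) * n) (Code_of B n) = (k + 1) * d
              \<and> (u_bounded ((k + 1) * n) ((k + 1) * d) (k * u) (Basis_of B n)
                   \<longleftrightarrow> real u \<ge> real d * (1 + 2 / real k)))"
proof -
  have span_B: "V.span (set B) = C" and d: "min_dist n C = d"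
    using basis code by (simp_all add: ordered_basis_def is_code_def)
  interpret code_basis n B
  proof
    show "set B \<subseteq> Fn n"
      using V.span_superset code span_B by (auto simp: is_code_def)
  qed (use basis len kpos in \<open>auto simp: ordered_basis_def\<close>)
  show ?thesis
    unfolding len[symmetric] ordered_basis_def is_code_def
    using distinct_Basis_of independent_Basis_of Code_of_subset_Fn dim_Code_of
      length_mult_min_dist_le min_dist_Code_of_if_u_bounded u_bounded_Basis_of_iff
    by (simp add: Code_of_def span_B d V.subspace_span)
qed

end
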